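(* There exists an absolute constant $c>0$ such that for every positive integer $n$ there is a set $S \subset [n]^2 = \{1,\dots,n\}^2$ with $|S| \ge c\, n^{5/4}$ which is skew corner-free, i.e. $S$ contains no three points of the form $$(x,y),\ (x,y+d),\ (x+d,y')$$ with $x,y,y'$ integers and $d \neq 0$ an integer.
   Context: A triple of points of the form $(x,y),(x,y+d),(x+d,y')$ with $d\neq 0$ (and $x,y,y'$ arbitrary) is called a skew corner; a set is skew corner-free if it contains no skew corner (all three points lying in the set). *)

theory Defs
  imports Complex_Main
begin

definition skew_corner_free :: "(int \<times> int) set \<Rightarrow> bool" where
  "skew_corner_free S \<longleftrightarrow>
     \<not> (\<exists>x y y' d. d \<noteq> 0 \<and> (x, y) \<in> S \<and> (x, y + d) \<in> S \<and> (x + d, y') \<in> S)"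

end

theory Submission
  imports Defs
begin

text \<open>
  A set G of 105 points in [0,40)^2 contains no skew corner modulo 40 whose d is not
  divisible by 40. Replacing every point of a skew corner-free set S by a copy of G,
  i.e. passing to G + 40 S, therefore preserves skew corner-freeness: the last base-40
  digit of d has to vanish, which forces the last digits of the three points to agree,
  and then d/40 yields a skew corner in S. Iterating k times gives a skew corner-free set
  of size 105^k in [0,40^k)^2, and 105 \<ge> 40 powr (5/4).
\<close>

definition skew_corner_free_mod :: "int \<Rightarrow> (int \<times> int) set \<Rightarrow> bool" where
  "skew_corner_free_mod m G \<longleftrightarrow>
     (\<forall>r s s' r' t. (r, s) \<in> G \<longrightarrow> (r, s') \<in> G \<longrightarrow> (r', t) \<in> G \<longrightarrow>
        (s' - s) mod m = (r' - r) mod m \<longrightarrow> (r' - r) mod m = 0)"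

lemma eq_if_diff_mod_eq_0:
  fixes a b m :: int
  assumes "a \<in> {0..<m}" "b \<in> {0..<m}" "(a - b) mod m = 0"
  shows "a = b"
proof -
  have "a mod m = b mod m"
    using assms(3) by (simp add: mod_eq_dvd_iff dvd_eq_mod_eq_0)
  then show ?thesis
    using assms(1,2) by simp
qed

lemma digits_unique:
  fixes m r r' u u' :: int
  assumes "r \<in> {0..<m}" "r' \<in> {0..<m}" "r + m * u = r' + m * u'"
  shows "r = r'" "u = u'"
proof -
  have "r - r' = m * (u' - u)"
    using assms(3) by (simp add: algebra_simps)
  then have "(r - r') mod m = 0"
    by simp
  then show "r = r'"
    by (rule eq_if_diff_mod_eq_0[OF assms(1,2)])
  then show "u = u'"
    using assms by auto
qed

lemma skew_corner_free_mod_digits_agree: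
  assumes "G \<subseteq> {0..<m} \<times> {0..<m}" "skew_corner_free_mod m G"
    and "(r, s) \<in> G" "(r, s') \<in> G" "(r', t) \<in> G" "(s' - s) mod m = (r' - r) mod m"
  shows "r' = r" "s' = s"
proof -
  have "(r' - r) mod m = 0"
    using assms(2-6) unfolding skew_corner_free_mod_def by blast
  moreover have "r \<in> {0..<m}" "s \<in> {0..<m}" "s' \<in> {0..<m}" "r' \<in> {0..<m}"
    using assms(1,3-5) by auto
  ultimately show "r' = r" "s' = s"
    using assms(6) eq_if_diff_mod_eq_0 by metis+
qed

definition blowup :: "int \<Rightarrow> (int \<times> int) set \<Rightarrow> (int \<times> int) set \<Rightarrow> (int \<times> int) set" where
  "blowup m G S = (\<lambda>((r, s), (u, w)). (r + m * u, s + m * w)) ` (G \<times> S)"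

lemma mem_blowup:
  "(x, y) \<in> blowup m G S \<longleftrightarrow>
     (\<exists>r s u w. (r, s) \<in> G \<and> (u, w) \<in> S \<and> x = r + m * u \<and> y = s + m * w)"
  unfolding blowup_def by force

lemma skew_corner_free_blowup:
  assumes G: "G \<subseteq> {0..<m} \<times> {0..<m}" "skew_corner_free_mod m G"
    and S: "skew_corner_free S"
  shows "skew_corner_free (blowup m G S)"
  unfolding skew_corner_free_def
proof
  assume "\<exists>x y y' d. d \<noteq> 0 \<and> (x, y) \<in> blowup m G S \<and> (x, y + d) \<in> blowup m G S
            \<and> (x + d, y') \<in> blowup m G S"
  then obtain x y y' d where "d \<noteq> 0" and
    q1: "(x, y) \<in> blowup m G S" and q2: "(x, y + d) \<in> blowup m G S" and
    q3: "(x + d, y') \<in> blowup m G S"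
    by blast
  from q1 obtain r1 s1 u1 w1 where
    p1: "(r1, s1) \<in> G" "(u1, w1) \<in> S" "x = r1 + m * u1" "y = s1 + m * w1"
    unfolding mem_blowup by blast
  from q2 obtain r2 s2 u2 w2 where
    p2: "(r2, s2) \<in> G" "(u2, w2) \<in> S" "x = r2 + m * u2" "y + d = s2 + m * w2"
    unfolding mem_blowup by blast
  from q3 obtain r3 s3 u3 w3 where
    p3: "(r3, s3) \<in> G" "(u3, w3) \<in> S" "x + d = r3 + m * u3"
    unfolding mem_blowup by blast
  have "r2 = r1" "u2 = u1"
    using digits_unique[of r1 m r2] G(1) p1(1,3) p2(1,3) by (metis mem_Sigma_iff subsetD)+
  have d_low: "d = (s2 - s1) + m * (w2 - w1)"
    using p1(4) p2(4) by (simp add: algebra_simps)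
  have d_col: "d = (r3 - r1) + m * (u3 - u1)"
    using p1(3) p3(3) by (simp add: algebra_simps)
  have "(s2 - s1) mod m = d mod m"
    unfolding d_low by simp
  moreover have "(r3 - r1) mod m = d mod m"
    unfolding d_col by simp
  ultimately have "r3 = r1" "s2 = s1"
    using skew_corner_free_mod_digits_agree[OF G p1(1) _ p3(1)] p2(1) \<open>r2 = r1\<close> by auto
  define d' where "d' = w2 - w1"
  have "m \<noteq> 0"
    using G(1) p1(1) by auto
  have "d = m * d'"
    using d_low \<open>s2 = s1\<close> by (simp add: d'_def)
  then have "d' \<noteq> 0" "u3 = u1 + d'"
    using d_col \<open>d \<noteq> 0\<close> \<open>r3 = r1\<close> \<open>m \<noteq> 0\<close> by auto
  moreover have "(u1, w1 + d') \<in> S"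
    using p2(2) \<open>u2 = u1\<close> by (simp add: d'_def)
  ultimately show False
    using S p1(2) p3(2) unfolding skew_corner_free_def by blast
qed

lemma add_mult_in_range:
  fixes m N r u :: int
  assumes "r \<in> {0..<m}" "u \<in> {0..<N}"
  shows "r + m * u \<in> {0..<m * N}"
proof -
  have "r + m * u < m * (u + 1)"
    using assms(1) by (simp add: algebra_simps)
  also have "\<dots> \<le> m * N"
    using assms by (intro mult_left_mono) auto
  finally show ?thesis
    using assms by simp
qed

lemma blowup_subset:
  assumes "G \<subseteq> {0..<m} \<times> {0..<m}" "S \<subseteq> {0..<N} \<times> {0..<N}"
  shows "blowup m G S \<subseteq> {0..<m * N} \<times> {0..<m * N}"
proof (rule subrelI)
  fix x y
  assume "(x, y) \<in> blowup m G S"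
  then obtain r s u w where "(r, s) \<in> G" "(u, w) \<in> S" "x = r + m * u" "y = s + m * w"
    unfolding mem_blowup by blast
  moreover have "r \<in> {0..<m}" "s \<in> {0..<m}" "u \<in> {0..<N}" "w \<in> {0..<N}"
    using assms calculation(1,2) by auto
  ultimately show "(x, y) \<in> {0..<m * N} \<times> {0..<m * N}"
    by (simp only: mem_Sigma_iff add_mult_in_range)
qed

lemma card_blowup:
  assumes "G \<subseteq> {0..<m} \<times> {0..<m}"
  shows "card (blowup m G S) = card G * card S"
proof -
  have "inj_on (\<lambda>((r, s), (u, w)). (r + m * u, s + m * w)) (G \<times> S)"
  proof (rule inj_onI, clarsimp)
    fix r s u w r' s' u' w'
    assume "(r, s) \<in> G" "(u, w) \<in> S" "(r', s') \<in> G" "(u', w') \<in> S"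
      and "r + m * u = r' + m * u'" "s + m * w = s' + m * w'"
    moreover have "r \<in> {0..<m}" "s \<in> {0..<m}" "r' \<in> {0..<m}" "s' \<in> {0..<m}"
      using assms calculation(1,3) by auto
    ultimately show "r = r' \<and> s = s' \<and> u = u' \<and> w = w'"
      using digits_unique by metis
  qed
  then show ?thesis
    unfolding blowup_def by (simp add: card_image card_cartesian_product)
qed

lemma blowup_iterate:
  assumes "G \<subseteq> {0..<m} \<times> {0..<m}" "skew_corner_free_mod m G"
  shows "(blowup m G ^^ k) {(0, 0)} \<subseteq> {0..<m ^ k} \<times> {0..<m ^ k}"
    and "card ((blowup m G ^^ k) {(0, 0)}) = card G ^ k"
    and "skew_corner_free ((blowup m G ^^ k) {(0, 0)})"
proof (induction k)
  case 0
  show "(blowup m G ^^ 0) {(0, 0)} \<subseteq> {0..<m ^ 0} \<times> {0..<m ^ 0}"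
    "card ((blowup m G ^^ 0) {(0, 0)}) = card G ^ 0"
    "skew_corner_free ((blowup m G ^^ 0) {(0, 0)})"
    by (auto simp: skew_corner_free_def)
next
  case (Suc k)
  show "(blowup m G ^^ Suc k) {(0, 0)} \<subseteq> {0..<m ^ Suc k} \<times> {0..<m ^ Suc k}"
    using blowup_subset[OF assms(1) Suc.IH(1)] by simp
  show "card ((blowup m G ^^ Suc k) {(0, 0)}) = card G ^ Suc k"
    using card_blowup[OF assms(1)] Suc.IH(2) by simp
  show "skew_corner_free ((blowup m G ^^ Suc k) {(0, 0)})"
    using skew_corner_free_blowup[OF assms Suc.IH(3)] by simp
qed

lemma skew_corner_free_translate:
  assumes "skew_corner_free S"
  shows "skew_corner_free ((\<lambda>(x, y). (x + a, y + b)) ` S)"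
  unfolding skew_corner_free_def
proof
  let ?T = "(\<lambda>(x, y). (x + a, y + b)) ` S"
  have shift_back: "(x - a, y - b) \<in> S" if "(x, y) \<in> ?T" for x y
    using that by auto
  assume "\<exists>x y y' d. d \<noteq> 0 \<and> (x, y) \<in> ?T \<and> (x, y + d) \<in> ?T \<and> (x + d, y') \<in> ?T"
  then obtain x y y' d where "d \<noteq> 0" "(x, y) \<in> ?T" "(x, y + d) \<in> ?T" "(x + d, y') \<in> ?T"
    by blast
  then have "(x - a, y - b) \<in> S" "(x - a, (y - b) + d) \<in> S" "((x - a) + d, y' - b) \<in> S"
    using shift_back by (simp_all add: algebra_simps)
  then show False
    using assms \<open>d \<noteq> 0\<close> unfolding skew_corner_free_def by blast
qed

lemma skew_corner_free_mod_columns: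
  assumes "distinct (map fst cs)"
    and "\<forall>(r, ss) \<in> set cs. \<forall>s \<in> set ss. \<forall>s' \<in> set ss. \<forall>r' \<in> fst ` set cs.
           (s' - s) mod m = (r' - r) mod m \<longrightarrow> (r' - r) mod m = 0"
  shows "skew_corner_free_mod m (\<Union>(r, ss) \<in> set cs. {r} \<times> set ss)"
  unfolding skew_corner_free_mod_def
proof (clarsimp)
  fix r s s' r' t ss ss' ss''
  assume "(r, ss) \<in> set cs" "s \<in> set ss" "(r, ss') \<in> set cs" "s' \<in> set ss'"
    "(r', ss'') \<in> set cs" "(s' - s) mod m = (r' - r) mod m"
  moreover have "ss' = ss"
    using assms(1) calculation(3,1) by (rule eq_key_imp_eq_value)
  ultimately show "(r' - r) mod m = 0"
    using assms(2) by fastforce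
qed

definition gadget_columns :: "(int \<times> int list) list" where
  "gadget_columns =
     [(0, [0,4,8,12,16,20,24,28,32,36]), (1, [0,3,8,11,16,19,24,27,32,35]),
      (2, [0,4,10,14,20,24,30,34]), (3, [0,5,10,15,21,26,31]), (5, [0,1,8,9,20,21,28,29]),
      (7, [0,1,10,11,20,21,30,31]), (10, [0,2,4,6,18,20,22,24]), (11, [0,2,5,7,21,23,26]),
      (15, [0,1,2,3,20,21,22,23]), (21, [0,1,4,5,8,9,13,36]), (23, [0,1,4,5,10,11,15]),
      (31, [0,1,2,3,4,5,6,7]), (39, [0,5,10,15,20,25,30,35])]"

definition gadget :: "(int \<times> int) set" where
  "gadget = (\<Union>(r, ss) \<in> set gadget_columns. {r} \<times> set ss)"

lemma card_gadget: "card gadget = 105"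
  unfolding gadget_def gadget_columns_def by code_simp

lemma gadget_subset: "gadget \<subseteq> {0..<40} \<times> {0..<40}"
  unfolding gadget_def gadget_columns_def by simp

lemma skew_corner_free_mod_gadget: "skew_corner_free_mod 40 gadget"
  unfolding gadget_def
  by (rule skew_corner_free_mod_columns; unfold gadget_columns_def; code_simp)

lemma powr_le_mult_power:
  fixes a b e x :: real
  assumes "0 < b" "0 \<le> e" "b powr e \<le> a" "0 \<le> x" "x \<le> b ^ Suc k"
  shows "x powr e \<le> b powr e * a ^ k"
proof -
  have "x powr e \<le> (b ^ Suc k) powr e"
    using assms(2,4,5) by (rule powr_mono2)
  also have "\<dots> = (b powr real (Suc k)) powr e"
    by (simp only: powr_realpow[OF assms(1)])
  also have "\<dots> = (b powr e) ^ Suc k"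
    using assms(1) by (simp only: powr_powr powr_power mult.commute)
  also have "\<dots> = b powr e * (b powr e) ^ k"
    by (rule power_Suc)
  also have "\<dots> \<le> b powr e * a ^ k"
    using assms(3) by (intro mult_left_mono power_mono) auto
  finally show ?thesis .
qed

lemma powr_40_le_105: "(40::real) powr (5/4) \<le> 105"
proof (rule power_le_imp_le_base[where n = 3])
  have "((40::real) powr (5/4)) ^ Suc 3 = 40 powr 5"
    by (subst powr_power) simp_all
  then show "((40::real) powr (5/4)) ^ Suc 3 \<le> 105 ^ Suc 3"
    by simp
qed simp

theorem theorem1p1:
  shows "\<exists>c::real. c > 0 \<and> (\<forall>n::nat. n \<ge> 1 \<longrightarrow>
     (\<exists>S. S \<subseteq> {1..int n} \<times> {1..int n} \<and> skew_corner_free S \<and>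
          real (card S) \<ge> c * real n powr (5/4)))"
proof (intro exI[of _ "1 / 40 powr (5/4)"] conjI allI impI)
  fix n :: nat
  assume "n \<ge> 1"
  then obtain k where k: "40 ^ k \<le> n" "n < 40 ^ Suc k"
    using ex_power_ivl1[of 40 n] by auto
  define S where "S = (blowup 40 gadget ^^ k) {(0, 0)}"
  define T where "T = (\<lambda>(x, y). (x + 1, y + 1)) ` S"
  note S = blowup_iterate[OF gadget_subset skew_corner_free_mod_gadget, of k, folded S_def]
  have "(40::int) ^ k \<le> int n"
    using k(1) by (metis of_nat_le_iff of_nat_numeral of_nat_power)
  then have "S \<subseteq> {0..<int n} \<times> {0..<int n}"
    using S(1) by (meson Sigma_mono ivl_subset order.refl order.trans)
  then have "T \<subseteq> {1..int n} \<times> {1..int n}"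
    unfolding T_def by force
  moreover have "skew_corner_free T"
    unfolding T_def using S(3) by (rule skew_corner_free_translate)
  moreover have "real n powr (5/4) \<le> 40 powr (5/4) * real (card T)"
  proof -
    have "card T = 105 ^ k"
      unfolding T_def using S(2) card_gadget by (subst card_image) (auto simp: inj_on_def)
    moreover have "real n \<le> 40 ^ Suc k"
      using k(2) by (metis less_imp_le of_nat_le_iff of_nat_numeral of_nat_power)
    ultimately show ?thesis
      using powr_40_le_105 by (auto intro: powr_le_mult_power)
  qed
  ultimately show "\<exists>S. S \<subseteq> {1..int n} \<times> {1..int n} \<and> skew_corner_free S \<and>
      real (card S) \<ge> 1 / 40 powr (5/4) * real n powr (5/4)"
    by (intro exI[of _ T]) (simp add: field_simps)
qed simp

end
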